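(* Let $a\in\mathbb{R}$, $\lambda>0$, and let $w$ be any solution of Airy's equation $w''(x)=xw(x)$. Define $$\mathcal{K}(a,\lambda;x,y,z)=\exp\big((\lambda/2)^{1/2}xyz\big)\,w\Big(\frac{\lambda^{1/3}}{2}(x^2+y^2+z^2)+\frac{a}{\lambda^{2/3}}\Big).$$ Then $$H(x)\mathcal{K}(x,y,z)=H(y)\mathcal{K}(x,y,z)=H(z)\mathcal{K}(x,y,z),$$ where $H(x)=-\frac{\partial^2}{\partial x^2}+ax^2+\frac{\lambda}{2}x^4$ acts in the variable $x$, and similarly for $H(y)$, $H(z)$. *)

theory Defs
  imports "HOL-Analysis.Analysis"
begin

definition Kker :: "real \<Rightarrow> real \<Rightarrow> (real \<Rightarrow> real) \<Rightarrow> real \<Rightarrow> real \<Rightarrow> real \<Rightarrow> real" where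
  "Kker a lam w x y z =
     exp (sqrt (lam / 2) * x * y * z) *
     w (lam powr (1/3) / 2 * (x^2 + y^2 + z^2) + a / lam powr (2/3))"

definition Hop :: "real \<Rightarrow> real \<Rightarrow> (real \<Rightarrow> real) \<Rightarrow> real \<Rightarrow> real" where
  "Hop a lam g t = - deriv (deriv g) t + (a * t^2 + lam / 2 * t^4) * g t"

end

theory Submission
  imports Defs
begin

text \<open>
  With \<open>r = \<lambda>\<^sup>1\<^sup>/\<^sup>3\<close> and \<open>u = r(x\<^sup>2 + y\<^sup>2 + z\<^sup>2)/2 + a/r\<^sup>2\<close>, the second
  \<open>x\<close>-derivative of \<open>\<K>\<close> produces \<open>w''(u) = u w(u)\<close> multiplied by \<open>r\<^sup>2x\<^sup>2\<close>, and
  \<open>r\<^sup>2x\<^sup>2u = (\<lambda>/2)x\<^sup>4 + ax\<^sup>2 + (\<lambda>/2)x\<^sup>2(y\<^sup>2 + z\<^sup>2)\<close> cancels the potential of \<open>H(x)\<close>.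
  What remains, \<open>kernel_energy\<close> below, depends on \<open>x, y, z\<close> only through the symmetric
  quantities \<open>xyz\<close>, \<open>x\<^sup>2 + y\<^sup>2 + z\<^sup>2\<close> and \<open>x\<^sup>2y\<^sup>2 + y\<^sup>2z\<^sup>2 + z\<^sup>2x\<^sup>2\<close>; since \<open>\<K>\<close> is
  itself symmetric, \<open>H(y)\<K>\<close> and \<open>H(z)\<K>\<close> have the same value.
\<close>

lemma deriv2_exp_mult_airy:
  fixes b p D :: real and w w' :: "real \<Rightarrow> real"
  assumes w: "\<And>t. (w has_real_derivative w' t) (at t)"
    and w': "\<And>t. (w' has_real_derivative t * w t) (at t)"
  shows "deriv (deriv (\<lambda>s. exp (b * s) * w (p * s\<^sup>2 + D))) t =
    exp (b * t) * ((b\<^sup>2 + 4 * p\<^sup>2 * t\<^sup>2 * (p * t\<^sup>2 + D)) * w (p * t\<^sup>2 + D)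
                   + (4 * b * p * t + 2 * p) * w' (p * t\<^sup>2 + D))"
proof -
  have first: "deriv (\<lambda>s. exp (b * s) * w (p * s\<^sup>2 + D)) =
      (\<lambda>s. exp (b * s) * (b * w (p * s\<^sup>2 + D) + 2 * p * s * w' (p * s\<^sup>2 + D)))"
  proof
    fix s
    show "deriv (\<lambda>s. exp (b * s) * w (p * s\<^sup>2 + D)) s =
        exp (b * s) * (b * w (p * s\<^sup>2 + D) + 2 * p * s * w' (p * s\<^sup>2 + D))"
      by (rule DERIV_imp_deriv)
        (auto intro!: derivative_eq_intros DERIV_chain2[OF w] simp: algebra_simps)
  qed
  show ?thesis
    unfolding first
    by (rule DERIV_imp_deriv)
      (auto intro!: derivative_eq_intros DERIV_chain2[OF w] DERIV_chain2[OF w']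
            simp: algebra_simps power2_eq_square)
qed

definition kernel_energy :: "real \<Rightarrow> real \<Rightarrow> (real \<Rightarrow> real) \<Rightarrow> (real \<Rightarrow> real) \<Rightarrow> real \<Rightarrow> real \<Rightarrow> real \<Rightarrow> real" where
  "kernel_energy a lam w w' x y z =
     exp (sqrt (lam / 2) * x * y * z) *
     - (lam powr (1/3) * (2 * sqrt (lam / 2) * x * y * z + 1)
          * w' (lam powr (1/3) / 2 * (x\<^sup>2 + y\<^sup>2 + z\<^sup>2) + a / lam powr (2/3))
      + lam / 2 * (x\<^sup>2 * y\<^sup>2 + y\<^sup>2 * z\<^sup>2 + z\<^sup>2 * x\<^sup>2)
          * w (lam powr (1/3) / 2 * (x\<^sup>2 + y\<^sup>2 + z\<^sup>2) + a / lam powr (2/3)))"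

lemma kernel_energy_swap:
  "kernel_energy a lam w w' y x z = kernel_energy a lam w w' x y z"
  "kernel_energy a lam w w' z y x = kernel_energy a lam w w' x y z"
  unfolding kernel_energy_def by (simp_all add: ac_simps)

lemma Kker_swap_12: "Kker a lam w x y z = Kker a lam w y x z"
  unfolding Kker_def by (simp add: ac_simps)

lemma Kker_swap_13: "Kker a lam w x y z = Kker a lam w z y x"
  unfolding Kker_def by (simp add: ac_simps)

lemma Hop_Kker:
  fixes w w' :: "real \<Rightarrow> real"
  assumes "lam > 0"
    and w: "\<And>t. (w has_real_derivative w' t) (at t)"
    and w': "\<And>t. (w' has_real_derivative t * w t) (at t)"
  shows "Hop a lam (\<lambda>s. Kker a lam w s y z) x = kernel_energy a lam w w' x y z"
proof -
  define c where "c = sqrt (lam / 2)"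
  define r where "r = lam powr (1/3)"
  define D where "D = r / 2 * (y\<^sup>2 + z\<^sup>2) + a / r\<^sup>2"
  have c2: "c\<^sup>2 = lam / 2" using assms(1) by (simp add: c_def)
  have r_pos: "r > 0" using assms(1) by (simp add: r_def)
  have r3: "r ^ 3 = lam" and r2: "lam powr (2/3) = r\<^sup>2"
    using assms(1) unfolding r_def by (simp_all add: powr_realpow[symmetric] powr_powr)
  have arg: "r / 2 * (x\<^sup>2 + y\<^sup>2 + z\<^sup>2) + a / lam powr (2/3) = r / 2 * x\<^sup>2 + D"
    by (simp add: D_def r2 algebra_simps)
  have K: "(\<lambda>s. Kker a lam w s y z) = (\<lambda>s. exp (c * y * z * s) * w (r / 2 * s\<^sup>2 + D))"
    by (auto simp: Kker_def c_def r_def[symmetric] r2 D_def algebra_simps)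
  have b2: "(c * y * z)\<^sup>2 = lam / 2 * (y\<^sup>2 * z\<^sup>2)"
    by (simp add: power_mult_distrib c2)
  have Q: "4 * (r / 2)\<^sup>2 * x\<^sup>2 * (r / 2 * x\<^sup>2 + D) = lam / 2 * x\<^sup>2 * (x\<^sup>2 + y\<^sup>2 + z\<^sup>2) + a * x\<^sup>2"
    unfolding D_def r3[symmetric] using r_pos
    by (simp add: field_simps power2_eq_square power3_eq_cube)
  show ?thesis
    unfolding Hop_def K deriv2_exp_mult_airy[OF w w'] b2 Q kernel_energy_def
      c_def[symmetric] r_def[symmetric] arg
    by (simp add: algebra_simps power4_eq_xxxx power2_eq_square)
qed

theorem proposition1:
  fixes a lam :: real and w w' :: "real \<Rightarrow> real" and x y z :: real
  assumes "lam > 0"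
    and "\<And>t. (w has_real_derivative w' t) (at t)"
    and "\<And>t. (w' has_real_derivative t * w t) (at t)"
  shows "Hop a lam (\<lambda>s. Kker a lam w s y z) x = Hop a lam (\<lambda>s. Kker a lam w x s z) y
       \<and> Hop a lam (\<lambda>s. Kker a lam w x s z) y = Hop a lam (\<lambda>s. Kker a lam w x y s) z"
proof -
  have "Hop a lam (\<lambda>s. Kker a lam w s y z) x = kernel_energy a lam w w' x y z"
    using assms by (rule Hop_Kker)
  moreover have "Hop a lam (\<lambda>s. Kker a lam w x s z) y = kernel_energy a lam w w' x y z"
  proof -
    have "(\<lambda>s. Kker a lam w x s z) = (\<lambda>s. Kker a lam w s x z)"
      by (rule ext) (rule Kker_swap_12)
    then show ?thesis
      using Hop_Kker[OF assms, where x = y and y = x] kernel_energy_swap(1) by simp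
  qed
  moreover have "Hop a lam (\<lambda>s. Kker a lam w x y s) z = kernel_energy a lam w w' x y z"
  proof -
    have "(\<lambda>s. Kker a lam w x y s) = (\<lambda>s. Kker a lam w s y x)"
      by (rule ext) (rule Kker_swap_13)
    then show ?thesis
      using Hop_Kker[OF assms, where x = z and z = x] kernel_energy_swap(2) by simp
  qed
  ultimately show ?thesis by simp
qed

end
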